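(* Let $w\in L^1_{loc}(\mathbb R^N)$ be nonnegative and for $r>0$ set $m_w(r):=\mathrm{ess\,inf}_{\nu(x)>r}w(x)$. Let $f:(0,+\infty)\to(0,+\infty)$ be a positive continuous nondecreasing function with $f(w)\in L^1_{loc}(\mathbb R^N)$. If $$\liminf_{R\to+\infty}\frac1{|B_R|}\int_{B_R}f(w(x))\,dx=0,$$ then $\lim_{t\to0}f(t)=0$ and $m_w(r)=0$ for every $r>0$.
   Context: $\mathbb R^N$ carries the structure of a homogeneous Carnot group $(\mathbb R^N,\circ,\delta_R)$ with homogeneous dimension $Q$ (Euclidean $\mathbb R^N$ included), and $\nu$ is a fixed homogeneous norm: a continuous function $\nu:\mathbb R^N\to[0,\infty)$ with $\nu(\xi^{-1})=\nu(\xi)$, $\nu(\xi)=0$ iff $\xi=0$, $\nu(\delta_R\xi)=R\nu(\xi)$. $B_R=\{x:\nu(x)<R\}$, and $|B_R|$ is its Lebesgue measure. *)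

theory Defs
  imports "HOL-Analysis.Analysis"
begin

definition dil :: "('n::finite \<Rightarrow> nat) \<Rightarrow> real \<Rightarrow> real^'n \<Rightarrow> real^'n" where
  "dil ex R x = (\<chi> i. R ^ ex i * x $ i)"

definition hom_dim :: "('n::finite \<Rightarrow> nat) \<Rightarrow> nat" where
  "hom_dim ex = (\<Sum>i\<in>UNIV. ex i)"

definition hom_group ::
  "(real^'n::finite \<Rightarrow> real^'n \<Rightarrow> real^'n) \<Rightarrow> (real^'n \<Rightarrow> real^'n) \<Rightarrow> ('n \<Rightarrow> nat) \<Rightarrow> bool" where
  "hom_group op ginv ex \<longleftrightarrow>
     (\<forall>x y z. op (op x y) z = op x (op y z)) \<and>
     (\<forall>x. op x 0 = x \<and> op 0 x = x) \<and>
     (\<forall>x. op x (ginv x) = 0 \<and> op (ginv x) x = 0) \<and>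
     continuous_on UNIV (\<lambda>p. op (fst p) (snd p)) \<and> continuous_on UNIV ginv \<and>
     (\<forall>i. ex i \<ge> 1) \<and>
     (\<forall>R>0. \<forall>x y. dil ex R (op x y) = op (dil ex R x) (dil ex R y))"

definition hom_norm ::
  "(real^'n::finite \<Rightarrow> real^'n) \<Rightarrow> ('n \<Rightarrow> nat) \<Rightarrow> (real^'n \<Rightarrow> real) \<Rightarrow> bool" where
  "hom_norm ginv ex \<nu> \<longleftrightarrow>
     continuous_on UNIV \<nu> \<and> (\<forall>x. \<nu> x \<ge> 0) \<and>
     (\<forall>x. \<nu> (ginv x) = \<nu> x) \<and> (\<forall>x. \<nu> x = 0 \<longleftrightarrow> x = 0) \<and>
     (\<forall>R>0. \<forall>x. \<nu> (dil ex R x) = R * \<nu> x)"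

definition hball :: "(real^'n::finite \<Rightarrow> real) \<Rightarrow> real \<Rightarrow> (real^'n) set" where
  "hball \<nu> R = {x. \<nu> x < R}"

definition ess_inf_on :: "'a measure \<Rightarrow> 'a set \<Rightarrow> ('a \<Rightarrow> real) \<Rightarrow> real" where
  "ess_inf_on M S g = Sup {c. AE x in M. x \<in> S \<longrightarrow> c \<le> g x}"

definition locally_integrable :: "(real^'n::finite \<Rightarrow> real) \<Rightarrow> bool" where
  "locally_integrable g \<longleftrightarrow> (\<forall>K. compact K \<longrightarrow> set_integrable lebesgue K g)"

end

theory Submission imports Defs begin

text \<open>The homogeneous balls are bounded open sets whose measure grows at least linearly in
  the radius, since they contain Euclidean balls of radius proportional to R for R \<ge> 1.
  Because f(w) is nonnegative, its average over the ball of radius R is at least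
  a (1 - |K| / |B_R|) whenever f(w) \<ge> a almost everywhere off a fixed set K of finite measure,
  so the liminf of these averages is at least a. With K empty and a = f(0) this forces
  f(0) = 0; if w \<ge> c > 0 almost everywhere on {\<nu> > r}, taking K = {\<nu> \<le> r} and a = f(c) > 0
  gives a contradiction.\<close>

lemma set_integral_ge_measure_diff:
  fixes g :: "'a \<Rightarrow> real"
  assumes A: "A \<in> fmeasurable M" and g_int: "set_integrable M A g"
    and K: "K \<in> fmeasurable M" and a: "0 \<le> a"
    and g_nonneg: "\<And>x. 0 \<le> g x"
    and g_ge: "AE x in M. x \<notin> K \<longrightarrow> a \<le> g x"
  shows "a * (measure M A - measure M K) \<le> (LINT x:A|M. g x)"
proof -
  have AK: "A - K \<in> fmeasurable M" using A K by (intro fmeasurable_Diff) auto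
  have "a * (measure M A - measure M K) \<le> a * measure M (A - K)"
    using a measure_diff_le_measure_setdiff[OF A K] by (intro mult_left_mono) auto
  also have "\<dots> = (LINT x:A - K|M. a)"
    using AK by (subst set_integral_const) (auto simp: fmeasurable_def)
  also have "\<dots> \<le> (LINT x:A - K|M. g x)"
  proof (rule set_integral_mono_AE)
    show "set_integrable M (A - K) (\<lambda>x. a)"
      using AK unfolding set_integrable_def
      by (simp add: integrable_mult_left integrable_real_indicator fmeasurable_def)
    show "set_integrable M (A - K) g"
      using set_integrable_subset[OF g_int fmeasurableD[OF AK]] by blast
    show "AE x\<in>A - K in M. a \<le> g x" using g_ge by eventually_elim auto
  qed
  also have "\<dots> \<le> (LINT x:A|M. g x)"
    using g_int set_integrable_subset[OF g_int fmeasurableD[OF AK]] g_nonneg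
    unfolding set_lebesgue_integral_def set_integrable_def
    by (intro integral_mono) (auto simp: indicator_def)
  finally show ?thesis .
qed

lemma Liminf_set_average_ge:
  fixes g :: "'a \<Rightarrow> real"
  assumes B: "\<And>R. B R \<in> fmeasurable M" and g_int: "\<And>R. set_integrable M (B R) g"
    and B_large: "filterlim (\<lambda>R. measure M (B R)) at_top F"
    and K: "K \<in> fmeasurable M" and a: "0 \<le> a"
    and g_nonneg: "\<And>x. 0 \<le> g x"
    and g_ge: "AE x in M. x \<notin> K \<longrightarrow> a \<le> g x"
  shows "ereal a \<le> Liminf F (\<lambda>R. ereal ((LINT x:B R|M. g x) / measure M (B R)))"
proof (cases "F = bot")
  case False
  define lower where "lower R = a - a * measure M K / measure M (B R)" for R
  have "((\<lambda>R. ereal (lower R)) \<longlongrightarrow> ereal (a - 0)) F"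
    unfolding lower_def
    by (intro tendsto_intros tendsto_divide_0[OF tendsto_const]
        filterlim_at_top_imp_at_infinity[OF B_large])
  then have "ereal a = Liminf F (\<lambda>R. ereal (lower R))"
    using lim_imp_Liminf[OF False] by (metis diff_zero)
  also have "\<dots> \<le> Liminf F (\<lambda>R. ereal ((LINT x:B R|M. g x) / measure M (B R)))"
  proof (rule Liminf_mono)
    show "\<forall>\<^sub>F R in F. ereal (lower R) \<le> ereal ((LINT x:B R|M. g x) / measure M (B R))"
      using filterlim_at_top_dense[THEN iffD1, OF B_large, rule_format, of 0]
    proof eventually_elim
      case (elim R)
      have "lower R * measure M (B R) = a * (measure M (B R) - measure M K)"
        using elim by (simp add: lower_def field_simps)
      also have "\<dots> \<le> (LINT x:B R|M. g x)"
        by (rule set_integral_ge_measure_diff[OF B g_int K a g_nonneg g_ge])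
      finally show ?case using elim by (simp add: field_simps)
    qed
  qed
  finally show ?thesis .
qed simp

lemma dil_nth [simp]: "dil ex R x $ i = R ^ ex i * x $ i"
  by (simp add: dil_def)

lemma hom_norm_ge_outside_unit_ball:
  fixes \<nu> :: "real^'n::finite \<Rightarrow> real"
  assumes nrm: "hom_norm ginv ex \<nu>" and ex1: "\<forall>i. ex i \<ge> 1"
  shows "\<exists>m>0. \<forall>x. 1 \<le> norm x \<longrightarrow> m \<le> \<nu> x"
proof -
  have cont: "continuous_on UNIV \<nu>" and nonneg: "\<And>x. \<nu> x \<ge> 0"
    and zero: "\<And>x. \<nu> x = 0 \<longleftrightarrow> x = 0"
    and hom: "\<And>R x. R > 0 \<Longrightarrow> \<nu> (dil ex R x) = R * \<nu> x"
    using nrm unfolding hom_norm_def by auto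
  obtain x0 where x0: "x0 \<in> sphere 0 1" "\<forall>y\<in>sphere 0 1. \<nu> x0 \<le> \<nu> y"
    using continuous_attains_inf[OF compact_sphere _ continuous_on_subset[OF cont], of 0 1]
    by auto
  have m_pos: "\<nu> x0 > 0" using nonneg[of x0] zero[of x0] x0(1) by force
  show ?thesis
  proof (intro exI[of _ "\<nu> x0"] conjI allI impI m_pos)
    fix x :: "real^'n" assume x: "1 \<le> norm x"
    text \<open>Shrink x along its dilation orbit until it hits the unit sphere.\<close>
    let ?g = "\<lambda>t. norm (dil ex t x)"
    have "continuous_on {0..1} ?g"
      unfolding dil_def by (intro continuous_intros)
    moreover have "?g 0 = 0"
      using ex1 by (simp add: vec_eq_iff dil_def) (metis Suc_le_lessD)
    moreover have "?g 1 = norm x" by (simp add: dil_def vec_eq_iff)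
    ultimately obtain t where t: "0 \<le> t" "t \<le> 1" "?g t = 1"
      using IVT'[of ?g 0 1 1] x by auto
    with \<open>?g 0 = 0\<close> have "t > 0" by (cases "t = 0") auto
    have "\<nu> x0 \<le> \<nu> (dil ex t x)" using x0(2) t(3) by simp
    also have "\<dots> = t * \<nu> x" using hom \<open>t > 0\<close> by simp
    also have "\<dots> \<le> \<nu> x" using t(2) nonneg[of x] mult_right_mono[of t 1 "\<nu> x"] by simp
    finally show "\<nu> x0 \<le> \<nu> x" .
  qed
qed

lemma bounded_hball:
  fixes \<nu> :: "real^'n::finite \<Rightarrow> real"
  assumes nrm: "hom_norm ginv ex \<nu>" and ex1: "\<forall>i. ex i \<ge> 1"
  shows "bounded (hball \<nu> R)"
proof (cases "R > 0")
  case False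
  then have "hball \<nu> R = {}"
    using nrm unfolding hom_norm_def hball_def by (auto, meson less_le_trans not_le)
  then show ?thesis by simp
next
  case R: True
  obtain m where m: "m > 0" "\<And>x. 1 \<le> norm x \<Longrightarrow> m \<le> \<nu> x"
    using hom_norm_ge_outside_unit_ball[OF nrm ex1] by blast
  have hom: "\<And>R x. R > 0 \<Longrightarrow> \<nu> (dil ex R x) = R * \<nu> x"
    using nrm unfolding hom_norm_def by auto
  define c where "c = m / R"
  have c: "c > 0" using m R by (simp add: c_def)
  show ?thesis unfolding bounded_iff
  proof (intro exI[of _ "\<Sum>i\<in>UNIV. 1 / c ^ ex i"] ballI)
    fix x assume "x \<in> hball \<nu> R"
    then have "\<nu> (dil ex c x) < c * R"
      using hom[OF c] c by (simp add: hball_def)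
    then have "\<nu> (dil ex c x) < m"
      using R by (simp add: c_def)
    then have "norm (dil ex c x) < 1" using m(2) by (meson not_le)
    then have "c ^ ex i * \<bar>x $ i\<bar> < 1" for i
      using component_le_norm_cart[of "dil ex c x" i] c by (simp add: abs_mult)
    then have "\<bar>x $ i\<bar> \<le> 1 / c ^ ex i" for i
      using c by (simp add: field_simps less_imp_le)
    then have "(\<Sum>i\<in>UNIV. \<bar>x $ i\<bar>) \<le> (\<Sum>i\<in>UNIV. 1 / c ^ ex i)"
      by (intro sum_mono) auto
    then show "norm x \<le> (\<Sum>i\<in>UNIV. 1 / c ^ ex i)"
      using norm_le_l1_cart[of x] by linarith
  qed
qed

lemma open_hball:
  assumes "hom_norm ginv ex \<nu>"
  shows "open (hball \<nu> R)"
  using assms unfolding hom_norm_def hball_def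
  by (intro open_Collect_less) (auto intro: continuous_intros)

lemma hball_lmeasurable:
  fixes \<nu> :: "real^'n::finite \<Rightarrow> real"
  assumes "hom_norm ginv ex \<nu>" and "\<forall>i. ex i \<ge> 1"
  shows "hball \<nu> R \<in> lmeasurable"
  using assms by (intro lmeasurable_open bounded_hball open_hball)

lemma ball_subset_hball:
  fixes \<nu> :: "real^'n::finite \<Rightarrow> real"
  assumes nrm: "hom_norm ginv ex \<nu>" and ex1: "\<forall>i. ex i \<ge> 1"
  shows "\<exists>d>0. \<forall>R\<ge>1. ball 0 (R * d) \<subseteq> hball \<nu> R"
proof -
  have hom: "\<And>R x. R > 0 \<Longrightarrow> \<nu> (dil ex R x) = R * \<nu> x"
    using nrm unfolding hom_norm_def by auto
  have "\<nu> 0 = 0" using nrm by (simp add: hom_norm_def)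
  then have "0 \<in> hball \<nu> 1" by (simp add: hball_def)
  then obtain d where d: "d > 0" "ball 0 d \<subseteq> hball \<nu> 1"
    using open_hball[OF nrm] open_contains_ball by blast
  show ?thesis
  proof (intro exI[of _ d] conjI allI impI d subsetI)
    fix R :: real and x :: "real^'n" assume R: "1 \<le> R" and x: "x \<in> ball 0 (R * d)"
    define y where "y = dil ex (1/R) x"
    have "\<bar>y $ i\<bar> \<le> \<bar>((1/R) *\<^sub>R x) $ i\<bar>" for i
    proof -
      have "R \<le> R ^ ex i" using R ex1 by (metis power_one_right power_increasing)
      then have "(1/R) ^ ex i \<le> 1 / R" using R by (simp add: power_one_over frac_le)
      then show ?thesis
        using R mult_right_mono[of "(1/R) ^ ex i" "1/R" "\<bar>x $ i\<bar>"]
        by (simp add: y_def abs_mult)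
    qed
    then have "norm y \<le> norm ((1/R) *\<^sub>R x)" by (intro norm_le_componentwise_cart) simp
    also have "\<dots> < d" using x R by (simp add: field_simps)
    finally have "\<nu> y < 1" using d by (auto simp: hball_def)
    moreover have "x = dil ex R y"
      using R by (simp add: y_def vec_eq_iff power_one_over field_simps)
    ultimately show "x \<in> hball \<nu> R" using hom[of R y] R by (simp add: hball_def)
  qed
qed

lemma measure_hball_tendsto_at_top:
  fixes \<nu> :: "real^'n::finite \<Rightarrow> real"
  assumes nrm: "hom_norm ginv ex \<nu>" and ex1: "\<forall>i. ex i \<ge> 1"
  shows "filterlim (\<lambda>R. measure lebesgue (hball \<nu> R)) at_top at_top"
proof -
  obtain d where d: "d > 0" "\<And>R. R \<ge> 1 \<Longrightarrow> ball 0 (R * d) \<subseteq> hball \<nu> R"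
    using ball_subset_hball[OF nrm ex1] by blast
  define c where "c = unit_ball_vol (real DIM(real^'n)) * d ^ DIM(real^'n)"
  have c: "c > 0" using d by (simp add: c_def)
  have "c * R \<le> measure lebesgue (hball \<nu> R)" if R: "R \<ge> 1" for R
  proof -
    have "c * R \<le> c * R ^ DIM(real^'n)"
      using R c power_increasing[of 1 "DIM(real^'n)" R] by simp
    also have "\<dots> = measure lebesgue (ball (0::real^'n) (R * d))"
      using R d(1) by (simp add: measure_completion content_ball c_def power_mult_distrib)
    also have "\<dots> \<le> measure lebesgue (hball \<nu> R)"
      using d(2)[OF R] hball_lmeasurable[OF nrm ex1] by (intro measure_mono_fmeasurable) auto
    finally show ?thesis .
  qed
  moreover have "filterlim (\<lambda>R. c * R) at_top at_top"
    using c by (intro filterlim_tendsto_pos_mult_at_top[OF tendsto_const] filterlim_ident)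
  ultimately show ?thesis
    by (elim filterlim_at_top_mono) (auto simp: eventually_at_top_linorder)
qed

lemma compact_hom_norm_le:
  fixes \<nu> :: "real^'n::finite \<Rightarrow> real"
  assumes nrm: "hom_norm ginv ex \<nu>" and ex1: "\<forall>i. ex i \<ge> 1"
  shows "compact {x. \<nu> x \<le> r}"
proof -
  have "closed {x. \<nu> x \<le> r}"
    using nrm unfolding hom_norm_def by (intro closed_Collect_le) (auto intro: continuous_intros)
  moreover have "bounded {x. \<nu> x \<le> r}"
    by (rule bounded_subset[OF bounded_hball[OF nrm ex1, of "r + 1"]]) (auto simp: hball_def)
  ultimately show ?thesis by (simp add: compact_eq_bounded_closed)
qed

lemma locally_integrable_imp_set_integrable_bounded:
  fixes g :: "real^'n::finite \<Rightarrow> real"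
  assumes "locally_integrable g" "bounded S" "S \<in> sets lebesgue"
  shows "set_integrable lebesgue S g"
proof -
  have "set_integrable lebesgue (closure S) g"
    using assms(1,2) by (simp add: locally_integrable_def compact_closure)
  then show ?thesis by (rule set_integrable_subset[OF _ assms(3) closure_subset])
qed

lemma mono_on_at_right_limit_le:
  fixes f :: "real \<Rightarrow> real"
  assumes mono: "mono_on {a<..} f" and lim: "(f \<longlongrightarrow> l) (at_right a)" and t: "a < t"
  shows "l \<le> f t"
proof (rule tendsto_upperbound[OF lim])
  show "\<forall>\<^sub>F x in at_right a. f x \<le> f t"
    unfolding eventually_at_right_field using mono t
    by (intro exI[of _ t]) (auto simp: mono_on_def)
qed simp

theorem lemma4p5:
  fixes op :: "real^'n::finite \<Rightarrow> real^'n \<Rightarrow> real^'n"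
    and ginv :: "real^'n \<Rightarrow> real^'n"
    and ex :: "'n \<Rightarrow> nat"
    and \<nu> :: "real^'n \<Rightarrow> real"
    and w :: "real^'n \<Rightarrow> real"
    and f :: "real \<Rightarrow> real"
  assumes grp: "hom_group op ginv ex"
    and nrm: "hom_norm ginv ex \<nu>"
    and w_loc: "locally_integrable w"
    and w_nonneg: "\<forall>x. w x \<ge> 0"
    and f_pos: "\<forall>t>0. f t > 0"
    and f_cont: "continuous_on {0<..} f"
    and f_mono: "mono_on {0<..} f"
    and f_zero: "(f \<longlongrightarrow> f 0) (at_right 0)"
    and fw_loc: "locally_integrable (\<lambda>x. f (w x))"
    and liminf0: "Liminf at_top (\<lambda>R::real.
        ereal ((LINT x:hball \<nu> R|lebesgue. f (w x)) / measure lebesgue (hball \<nu> R))) = 0"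
  shows "(f \<longlongrightarrow> 0) (at_right 0) \<and> (\<forall>r>0. ess_inf_on lebesgue {x. \<nu> x > r} w = 0)"
proof -
  have ex1: "\<forall>i. ex i \<ge> 1" using grp unfolding hom_group_def by auto
  have f0_nonneg: "0 \<le> f 0"
    using f_pos by (intro tendsto_lowerbound[OF f_zero])
      (auto simp: eventually_at_right_field less_imp_le intro!: exI[of _ 1])
  have f0_le_fw: "f 0 \<le> f (w x)" for x
    using mono_on_at_right_limit_le[OF f_mono f_zero, of "w x"] w_nonneg
    by (cases "w x = 0") (auto simp: less_le)
  have lower_bound_nonpos: "a \<le> 0"
    if K: "K \<in> lmeasurable" and a: "0 \<le> a" and ge: "AE x in lebesgue. x \<notin> K \<longrightarrow> a \<le> f (w x)"
    for K a
    using Liminf_set_average_ge[OF hball_lmeasurable[OF nrm ex1]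
        locally_integrable_imp_set_integrable_bounded[OF fw_loc bounded_hball[OF nrm ex1]]
        measure_hball_tendsto_at_top[OF nrm ex1] K a _ ge]
      f0_nonneg f0_le_fw liminf0 hball_lmeasurable[OF nrm ex1]
    by (auto intro: order.trans)
  have "f 0 = 0"
    using lower_bound_nonpos[of "{}" "f 0"] f0_nonneg f0_le_fw by simp
  moreover have "ess_inf_on lebesgue {x. \<nu> x > r} w = 0" if "r > 0" for r
  proof -
    have "c \<le> 0" if c: "AE x in lebesgue. x \<in> {x. \<nu> x > r} \<longrightarrow> c \<le> w x" for c
    proof (rule ccontr)
      assume "\<not> c \<le> 0"
      then have "0 < f c" and "AE x in lebesgue. x \<notin> {x. \<nu> x \<le> r} \<longrightarrow> f c \<le> f (w x)"
        using f_pos c f_mono by (auto simp: mono_on_def elim!: AE_mp)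
      moreover have "{x. \<nu> x \<le> r} \<in> lmeasurable"
        using compact_hom_norm_le[OF nrm ex1] by (rule lmeasurable_compact)
      ultimately show False
        using lower_bound_nonpos[of "{x. \<nu> x \<le> r}" "f c"] by simp
    qed
    then show ?thesis
      unfolding ess_inf_on_def using w_nonneg by (intro cSup_eq_maximum) auto
  qed
  ultimately show ?thesis using f_zero by simp
qed

end
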